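(* The Ewens distribution $p^\star$, $p^\star_N(\pi)=\frac{\prod_{B\in\pi}(b-1)!}{n!}$, is the unique random partition $p$ that generates the potential for TU games and satisfies conditional independence.
   Context: $\mathbf{U}$ is a finite set of players; cardinalities of $N,S,B$ are $n,s,b$. $\Pi(N)$ is the set of partitions of $N$ ($\Pi(\emptyset)=\{\emptyset\}$). A random partition is $p=(p_N)_{N\subseteq\mathbf{U}}$ with $p_N$ a probability distribution on $\Pi(N)$. A TU game on $N$ is $v:2^N\to\mathbb{R}$ with $v(\emptyset)=0$. The potential for TU games is $\mathrm{Pot}(v)=\sum_{\emptyset\ne S\subseteq N}\frac{(s-1)!(n-s)!}{n!}v(S)$ (the unique map vanishing on the empty game with $\sum_{i\in N}[\mathrm{Pot}(v)-\mathrm{Pot}(v|_{2^{N\setminus\{i\}}})]=v(N)$). $p$ generates the potential for TU games if $\sum_{\pi\in\Pi(N)}p_N(\pi)\sum_{B\in\pi}v(B)=\mathrm{Pot}(v)$ for all $N\subseteq\mathbf{U}$ and TU games $v$ on $N$. $p$ satisfies conditional independence if $p_N(\pi)=p_{N\setminus B}(\pi\setminus\{B\})\sum_{\tau\in\Pi(N):B\in\tau}p_N(\tau)$ for all $N\subseteq\mathbf{U}$, $\pi\in\Pi(N)$, $B\in\pi$. *)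

theory Defs
  imports Complex_Main "HOL-Library.Disjoint_Sets"
begin

text \<open>The universe U of players is the (finite) type 'a. A coalition N is any set of
type 'a set; Pi(N) is the set of partitions of N, given by partition_on N
(which yields Pi({}) = {{}}).\<close>

definition partitions :: "'a set \<Rightarrow> 'a set set set" where
  "partitions N = {\<pi>. partition_on N \<pi>}"

definition random_partition :: "('a set \<Rightarrow> 'a set set \<Rightarrow> real) \<Rightarrow> bool" where
  "random_partition p \<longleftrightarrow>
     (\<forall>N \<pi>. \<pi> \<in> partitions N \<longrightarrow> p N \<pi> \<ge> 0) \<and>
     (\<forall>N \<pi>. \<pi> \<notin> partitions N \<longrightarrow> p N \<pi> = 0) \<and>
     (\<forall>N. (\<Sum>\<pi>\<in>partitions N. p N \<pi>) = 1)"

text \<open>A TU game on N: v with v {} = 0; only its values on subsets of N matter.\<close>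

definition Pot :: "'a set \<Rightarrow> ('a set \<Rightarrow> real) \<Rightarrow> real" where
  "Pot N v = (\<Sum>S\<in>Pow N - {{}}.
      (fact (card S - 1) * fact (card N - card S) / fact (card N)) * v S)"

definition generates_potential :: "('a set \<Rightarrow> 'a set set \<Rightarrow> real) \<Rightarrow> bool" where
  "generates_potential p \<longleftrightarrow>
     (\<forall>N (v :: 'a set \<Rightarrow> real). v {} = 0 \<longrightarrow>
        (\<Sum>\<pi>\<in>partitions N. p N \<pi> * (\<Sum>B\<in>\<pi>. v B)) = Pot N v)"

definition conditional_independence :: "('a set \<Rightarrow> 'a set set \<Rightarrow> real) \<Rightarrow> bool" where
  "conditional_independence p \<longleftrightarrow>
     (\<forall>N \<pi> B. \<pi> \<in> partitions N \<longrightarrow> B \<in> \<pi> \<longrightarrow>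
        p N \<pi> = p (N - B) (\<pi> - {B}) * (\<Sum>\<tau>\<in>{\<tau>\<in>partitions N. B \<in> \<tau>}. p N \<tau>))"

definition ewens :: "'a set \<Rightarrow> 'a set set \<Rightarrow> real" where
  "ewens N \<pi> = (if \<pi> \<in> partitions N
      then (\<Prod>B\<in>\<pi>. fact (card B - 1)) / fact (card N) else 0)"

end

theory Submission
  imports Defs
begin

text \<open>Testing the potential identity on the game that is \<open>1\<close> on a single coalition \<open>B\<close> and
  \<open>0\<close> elsewhere shows that generating the potential means exactly that every nonempty
  \<open>B \<subseteq> N\<close> is a block with probability \<open>(b - 1)! (n - b)! / n!\<close>. Conditional independence
  writes \<open>p N \<pi>\<close> as \<open>p (N - B) (\<pi> - {B})\<close> times the probability that \<open>B\<close> is a block, so by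
  induction on \<open>N\<close> there is at most one such random partition. The Ewens distribution is one:
  its block probabilities follow from \<open>\<Sum>\<pi>\<in>partitions N. \<Prod>B\<in>\<pi>. (b - 1)! = n!\<close>, and its
  product form makes conditional independence immediate.\<close>

definition block_prob :: "('a set \<Rightarrow> 'a set set \<Rightarrow> real) \<Rightarrow> 'a set \<Rightarrow> 'a set \<Rightarrow> real" where
  "block_prob p N B = (\<Sum>\<tau>\<in>{\<tau>\<in>partitions N. B \<in> \<tau>}. p N \<tau>)"

definition pot_weight :: "'a set \<Rightarrow> 'a set \<Rightarrow> real" where
  "pot_weight N S = fact (card S - 1) * fact (card N - card S) / fact (card N)"

lemma finite_partitions: "finite N \<Longrightarrow> finite (partitions N)"
  using finitely_many_partition_on unfolding partitions_def by auto

lemma partitions_empty: "partitions {} = {{}}"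
  unfolding partitions_def using partition_on_empty by auto

lemma partitions_blockD:
  assumes "\<pi> \<in> partitions N" "B \<in> \<pi>"
  shows "B \<subseteq> N" "B \<noteq> {}"
  using assms partition_onD1 partition_onD3 unfolding partitions_def by blast+

lemma insert_block_partitions:
  assumes "\<sigma> \<in> partitions (N - B)" "B \<subseteq> N" "B \<noteq> {}"
  shows "insert B \<sigma> \<in> partitions N" "B \<notin> \<sigma>"
proof -
  have "\<Union>\<sigma> = N - B"
    using assms(1) partition_onD1 unfolding partitions_def by auto
  then show "insert B \<sigma> \<in> partitions N" "B \<notin> \<sigma>"
    using assms partition_on_insert[of B \<sigma> N] unfolding partitions_def disjnt_def by auto
qed

lemma Diff_block_partitions:
  assumes "\<tau> \<in> partitions N" "B \<in> \<tau>"
  shows "\<tau> - {B} \<in> partitions (N - B)"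
proof -
  have "disjnt B (\<Union>(\<tau> - {B}))"
    using assms partition_onD2 unfolding partitions_def disjnt_def pairwise_def by blast
  moreover have "insert B (\<tau> - {B}) = \<tau>"
    using assms(2) by auto
  ultimately show ?thesis
    using assms partition_on_insert[of B "\<tau> - {B}" N] unfolding partitions_def by auto
qed

lemma sum_partitions_containing_block:
  assumes "B \<subseteq> N" "B \<noteq> {}"
  shows "(\<Sum>\<tau>\<in>{\<tau>\<in>partitions N. B \<in> \<tau>}. f \<tau>) = (\<Sum>\<sigma>\<in>partitions (N - B). f (insert B \<sigma>))"
proof (rule sum.reindex_bij_witness[where j = "\<lambda>\<tau>. \<tau> - {B}" and i = "insert B"])
  fix \<tau> assume "\<tau> \<in> {\<tau> \<in> partitions N. B \<in> \<tau>}"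
  then show "insert B (\<tau> - {B}) = \<tau>" "\<tau> - {B} \<in> partitions (N - B)"
    "f (insert B (\<tau> - {B})) = f \<tau>"
    using Diff_block_partitions by (auto simp: insert_absorb)
next
  fix \<sigma> assume "\<sigma> \<in> partitions (N - B)"
  then show "insert B \<sigma> - {B} = \<sigma>" "insert B \<sigma> \<in> {\<tau> \<in> partitions N. B \<in> \<tau>}"
    using insert_block_partitions[OF _ assms] by auto
qed

lemma sum_partitions_containing_block_prod:
  fixes g :: "'a set \<Rightarrow> 'b::comm_semiring_1"
  assumes "finite N" "B \<subseteq> N" "B \<noteq> {}"
  shows "(\<Sum>\<tau>\<in>{\<tau>\<in>partitions N. B \<in> \<tau>}. \<Prod>C\<in>\<tau>. g C)
       = g B * (\<Sum>\<sigma>\<in>partitions (N - B). \<Prod>C\<in>\<sigma>. g C)"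
proof -
  have "(\<Sum>\<tau>\<in>{\<tau>\<in>partitions N. B \<in> \<tau>}. \<Prod>C\<in>\<tau>. g C)
      = (\<Sum>\<sigma>\<in>partitions (N - B). \<Prod>C\<in>insert B \<sigma>. g C)"
    by (rule sum_partitions_containing_block[OF assms(2,3)])
  also have "\<dots> = (\<Sum>\<sigma>\<in>partitions (N - B). g B * (\<Prod>C\<in>\<sigma>. g C))"
  proof (intro sum.cong refl)
    fix \<sigma> assume \<sigma>: "\<sigma> \<in> partitions (N - B)"
    then have "finite \<sigma>"
      using assms(1) finite_elements[of "N - B" \<sigma>] unfolding partitions_def by blast
    then show "(\<Prod>C\<in>insert B \<sigma>. g C) = g B * (\<Prod>C\<in>\<sigma>. g C)"
      using insert_block_partitions(2)[OF \<sigma> assms(2,3)] by simp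
  qed
  also have "\<dots> = g B * (\<Sum>\<sigma>\<in>partitions (N - B). \<Prod>C\<in>\<sigma>. g C)"
    by (simp add: sum_distrib_left)
  finally show ?thesis .
qed

lemma sum_partitions_by_block_of:
  assumes "finite N" "x \<in> N"
  shows "(\<Sum>\<pi>\<in>partitions N. f \<pi>)
       = (\<Sum>C\<in>Pow (N - {x}). \<Sum>\<pi>\<in>{\<pi>\<in>partitions N. insert x C \<in> \<pi>}. f \<pi>)"
proof -
  define A where "A C = {\<pi>\<in>partitions N. insert x C \<in> \<pi>}" for C
  have cover: "partitions N = (\<Union>C\<in>Pow (N - {x}). A C)"
  proof (intro subset_antisym subsetI)
    fix \<pi> assume \<pi>: "\<pi> \<in> partitions N"
    then obtain B where B: "B \<in> \<pi>" "x \<in> B"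
      using assms(2) partition_onD1 unfolding partitions_def by blast
    then have "\<pi> \<in> A (B - {x})" "B - {x} \<in> Pow (N - {x})"
      using \<pi> partitions_blockD[OF \<pi> B(1)] unfolding A_def by (auto simp: insert_absorb)
    then show "\<pi> \<in> (\<Union>C\<in>Pow (N - {x}). A C)" by blast
  qed (auto simp: A_def)
  have A_disjoint: "A C \<inter> A D = {}" if "C \<in> Pow (N - {x})" "D \<in> Pow (N - {x})" "C \<noteq> D" for C D
  proof (intro equalityI subsetI)
    fix \<pi> assume "\<pi> \<in> A C \<inter> A D"
    then have "\<pi> \<in> partitions N" "insert x C \<in> \<pi>" "insert x D \<in> \<pi>"
      unfolding A_def by auto
    moreover have "insert x C \<noteq> insert x D"
      using that by auto
    ultimately have "insert x C \<inter> insert x D = {}"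
      unfolding partitions_def by (blast dest: partition_onD2 disjointD)
    then show "\<pi> \<in> {}" by simp
  qed simp
  have "(\<Sum>\<pi>\<in>partitions N. f \<pi>) = (\<Sum>C\<in>Pow (N - {x}). \<Sum>\<pi>\<in>A C. f \<pi>)"
    unfolding cover
  proof (rule sum.UNION_disjoint)
    show "finite (Pow (N - {x}))" "\<forall>C\<in>Pow (N - {x}). finite (A C)"
      using assms(1) finite_partitions[OF assms(1)] unfolding A_def by auto
  qed (use A_disjoint in blast)
  then show ?thesis
    unfolding A_def .
qed

lemma sum_Pow_fact_card:
  assumes "finite M"
  shows "(\<Sum>C\<in>Pow M. fact (card C) * fact (card M - card C))
       = (fact (card M + 1) :: 'b::{comm_semiring_1,semiring_char_0})"
proof -
  let ?m = "card M"
  have "(\<Sum>C\<in>Pow M. fact (card C) * fact (?m - card C))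
      = (\<Sum>k\<le>?m. \<Sum>C\<in>{C \<in> Pow M. card C = k}. fact (card C) * fact (?m - card C) :: 'b)"
    using assms by (intro sum.group[symmetric]) (auto intro: card_mono)
  also have "\<dots> = (\<Sum>k\<le>?m. \<Sum>C\<in>{C \<in> Pow M. card C = k}. fact k * fact (?m - k))"
    by (intro sum.cong) auto
  also have "\<dots> = (\<Sum>k\<le>?m. of_nat (?m choose k) * (fact k * fact (?m - k)))"
    using n_subsets[OF assms] by (simp add: Pow_def)
  also have "\<dots> = (\<Sum>k\<le>?m. fact ?m)"
  proof (intro sum.cong refl)
    fix k assume "k \<in> {..?m}"
    then have "of_nat (fact k * fact (?m - k) * (?m choose k)) = (of_nat (fact ?m) :: 'b)"
      by (simp only: binomial_fact_lemma atMost_iff)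
    then show "of_nat (?m choose k) * (fact k * fact (?m - k)) = (fact ?m :: 'b)"
      by (simp add: mult_ac)
  qed
  also have "\<dots> = fact (?m + 1)"
    by (simp add: algebra_simps)
  finally show ?thesis .
qed

text \<open>Both sides count the permutations of \<open>N\<close>: a block of size \<open>b\<close> can be closed into
  a cycle in \<open>(b - 1)!\<close> ways.\<close>

lemma sum_partitions_prod_fact:
  "finite N \<Longrightarrow> (\<Sum>\<pi>\<in>partitions N. \<Prod>B\<in>\<pi>. fact (card B - 1)) = (fact (card N) :: 'b::{comm_semiring_1,semiring_char_0})"
proof (induction N rule: finite_psubset_induct)
  case (psubset N)
  show ?case
  proof (cases "N = {}")
    case True
    then show ?thesis by (simp add: partitions_empty)
  next
    case False
    then obtain x where x: "x \<in> N" by blast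
    let ?M = "N - {x}"
    have "(\<Sum>\<pi>\<in>partitions N. \<Prod>B\<in>\<pi>. fact (card B - 1))
        = (\<Sum>C\<in>Pow ?M. \<Sum>\<pi>\<in>{\<pi>\<in>partitions N. insert x C \<in> \<pi>}. \<Prod>B\<in>\<pi>. fact (card B - 1) :: 'b)"
      by (rule sum_partitions_by_block_of[OF psubset.hyps x])
    also have "\<dots> = (\<Sum>C\<in>Pow ?M. fact (card C) * fact (card ?M - card C))"
    proof (intro sum.cong refl)
      fix C assume C: "C \<in> Pow ?M"
      then have "finite C" "x \<notin> C" "insert x C \<subseteq> N"
        using psubset.hyps x finite_subset by auto
      have "(\<Sum>\<pi>\<in>{\<pi>\<in>partitions N. insert x C \<in> \<pi>}. \<Prod>B\<in>\<pi>. fact (card B - 1))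
          = fact (card (insert x C) - 1) * (\<Sum>\<sigma>\<in>partitions (N - insert x C). \<Prod>B\<in>\<sigma>. fact (card B - 1) :: 'b)"
        using \<open>insert x C \<subseteq> N\<close> by (intro sum_partitions_containing_block_prod psubset.hyps) auto
      also have "\<dots> = fact (card C) * fact (card (N - insert x C))"
      proof -
        have "N - insert x C \<subset> N"
          using x by blast
        then show ?thesis
          using psubset.IH \<open>finite C\<close> \<open>x \<notin> C\<close> by simp
      qed
      also have "N - insert x C = ?M - C"
        by blast
      finally show "(\<Sum>\<pi>\<in>{\<pi>\<in>partitions N. insert x C \<in> \<pi>}. \<Prod>B\<in>\<pi>. fact (card B - 1))
          = (fact (card C) * fact (card ?M - card C) :: 'b)"
        using C \<open>finite C\<close> by (simp add: card_Diff_subset)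
    qed
    also have "\<dots> = fact (card ?M + 1)"
      using psubset.hyps by (intro sum_Pow_fact_card) simp
    also have "\<dots> = fact (card N)"
      using card_Suc_Diff1[OF psubset.hyps x] by simp
    finally show ?thesis .
  qed
qed

lemma sum_partitions_sum_blocks:
  assumes "finite N"
  shows "(\<Sum>\<pi>\<in>partitions N. p N \<pi> * (\<Sum>B\<in>\<pi>. v B))
       = (\<Sum>B\<in>Pow N - {{}}. block_prob p N B * v B)"
proof -
  have blocks: "\<pi> = {B \<in> Pow N - {{}}. B \<in> \<pi>}" if "\<pi> \<in> partitions N" for \<pi>
    using partitions_blockD[OF that] by auto
  have "(\<Sum>\<pi>\<in>partitions N. p N \<pi> * (\<Sum>B\<in>\<pi>. v B))
      = (\<Sum>\<pi>\<in>partitions N. \<Sum>B\<in>{B \<in> Pow N - {{}}. B \<in> \<pi>}. p N \<pi> * v B)"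
    by (intro sum.cong refl) (subst (2) blocks, auto simp: sum_distrib_left)
  also have "\<dots> = (\<Sum>B\<in>Pow N - {{}}. \<Sum>\<pi>\<in>{\<pi> \<in> partitions N. B \<in> \<pi>}. p N \<pi> * v B)"
    using assms finite_partitions by (intro sum.swap_restrict) auto
  also have "\<dots> = (\<Sum>B\<in>Pow N - {{}}. block_prob p N B * v B)"
    by (simp add: block_prob_def sum_distrib_right)
  finally show ?thesis .
qed

lemma generates_potential_iff_block_prob:
  fixes p :: "'a::finite set \<Rightarrow> 'a set set \<Rightarrow> real"
  shows "generates_potential p \<longleftrightarrow>
    (\<forall>N B. B \<subseteq> N \<longrightarrow> B \<noteq> {} \<longrightarrow> block_prob p N B = pot_weight N B)"
proof -
  have Pot_eq: "Pot N v = (\<Sum>B\<in>Pow N - {{}}. pot_weight N B * v B)" for N and v :: "'a set \<Rightarrow> real"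
    by (simp add: Pot_def pot_weight_def)
  show ?thesis
  proof
    assume gp: "generates_potential p"
    show "\<forall>N B. B \<subseteq> N \<longrightarrow> B \<noteq> {} \<longrightarrow> block_prob p N B = pot_weight N B"
    proof (intro allI impI)
      fix N B :: "'a set" assume B: "B \<subseteq> N" "B \<noteq> {}"
      let ?v = "\<lambda>S. if S = B then 1 else 0 :: real"
      have "(\<Sum>S\<in>Pow N - {{}}. block_prob p N S * ?v S) = (\<Sum>S\<in>Pow N - {{}}. pot_weight N S * ?v S)"
        using gp B unfolding generates_potential_def by (simp add: sum_partitions_sum_blocks Pot_eq)
      then show "block_prob p N B = pot_weight N B"
        using B by (simp add: if_distrib cong: if_cong)
    qed
  qed (simp add: generates_potential_def sum_partitions_sum_blocks Pot_eq)
qed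

lemma block_prob_ewens:
  fixes N :: "'a::finite set"
  assumes "B \<subseteq> N" "B \<noteq> {}"
  shows "block_prob ewens N B = pot_weight N B"
proof -
  have "block_prob ewens N B = (\<Sum>\<tau>\<in>{\<tau>\<in>partitions N. B \<in> \<tau>}. \<Prod>C\<in>\<tau>. fact (card C - 1)) / fact (card N)"
    by (simp add: block_prob_def ewens_def sum_divide_distrib)
  also have "\<dots> = fact (card B - 1) * fact (card (N - B)) / fact (card N)"
    using sum_partitions_containing_block_prod[OF finite assms, of "\<lambda>C. fact (card C - 1) :: real"]
      sum_partitions_prod_fact[OF finite, of "N - B"] by simp
  also have "\<dots> = pot_weight N B"
    using assms by (simp add: pot_weight_def card_Diff_subset finite_subset)
  finally show ?thesis .
qed

lemma generates_potential_ewens: "generates_potential (ewens :: 'a::finite set \<Rightarrow> _)"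
  unfolding generates_potential_iff_block_prob using block_prob_ewens by blast

lemma random_partition_ewens: "random_partition (ewens :: 'a::finite set \<Rightarrow> _)"
proof -
  have "(\<Sum>\<pi>\<in>partitions N. ewens N \<pi>) = 1" for N :: "'a set"
    using sum_partitions_prod_fact[of N, where 'b = real]
    by (simp add: ewens_def sum_divide_distrib[symmetric] cong: sum.cong)
  then show ?thesis
    unfolding random_partition_def by (auto simp: ewens_def prod_nonneg)
qed

lemma conditional_independence_ewens: "conditional_independence (ewens :: 'a::finite set \<Rightarrow> _)"
  unfolding conditional_independence_def block_prob_def[symmetric]
proof (intro allI impI)
  fix N :: "'a set" and \<pi> B
  assume \<pi>: "\<pi> \<in> partitions N" and B: "B \<in> \<pi>"
  note B_block = partitions_blockD[OF \<pi> B]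
  have "ewens N \<pi> = fact (card B - 1) * (\<Prod>C\<in>\<pi> - {B}. fact (card C - 1)) / fact (card N)"
    using \<pi> B by (simp add: ewens_def prod.remove)
  also have "\<dots> = (\<Prod>C\<in>\<pi> - {B}. fact (card C - 1)) / fact (card (N - B)) * pot_weight N B"
    using B_block by (simp add: pot_weight_def card_Diff_subset finite_subset)
  also have "\<dots> = ewens (N - B) (\<pi> - {B}) * block_prob ewens N B"
    using Diff_block_partitions[OF \<pi> B] block_prob_ewens[OF B_block] by (simp add: ewens_def)
  finally show "ewens N \<pi> = ewens (N - B) (\<pi> - {B}) * block_prob ewens N B" .
qed

lemma random_partition_empty:
  assumes "random_partition p"
  shows "p {} {} = 1"
proof -
  have "(\<Sum>\<pi>\<in>partitions {}. p {} \<pi>) = 1"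
    using assms unfolding random_partition_def by blast
  then show ?thesis by (simp add: partitions_empty)
qed

lemma conditional_independenceD:
  assumes "conditional_independence p" "\<pi> \<in> partitions N" "B \<in> \<pi>"
  shows "p N \<pi> = p (N - B) (\<pi> - {B}) * block_prob p N B"
  using assms(1)[unfolded conditional_independence_def, rule_format, OF assms(2,3)]
  unfolding block_prob_def .

lemma conditional_independence_eqI:
  fixes p q :: "'a::finite set \<Rightarrow> 'a set set \<Rightarrow> real"
  assumes "random_partition p" "random_partition q"
    and "conditional_independence p" "conditional_independence q"
    and "\<And>N B. B \<subseteq> N \<Longrightarrow> B \<noteq> {} \<Longrightarrow> block_prob p N B = block_prob q N B"
  shows "p = q"
proof -
  have "p N \<pi> = q N \<pi>" for N \<pi>
  proof (induction N arbitrary: \<pi> rule: finite_psubset_induct[OF finite])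
    case (1 N)
    show ?case
    proof (cases "\<pi> \<in> partitions N")
      case False
      then show ?thesis using assms(1,2) unfolding random_partition_def by simp
    next
      case \<pi>: True
      show ?thesis
      proof (cases "\<pi> = {}")
        case True
        then have "N = {}" using \<pi> partition_onD1 unfolding partitions_def by auto
        then show ?thesis using True random_partition_empty[OF assms(1)] random_partition_empty[OF assms(2)] by simp
      next
        case False
        then obtain B where B: "B \<in> \<pi>" by blast
        note B_block = partitions_blockD[OF \<pi> B]
        have "N - B \<subset> N"
          using B_block by blast
        then have "p (N - B) (\<pi> - {B}) = q (N - B) (\<pi> - {B})"
          by (rule "1.IH")
        then show ?thesis
          using conditional_independenceD[OF assms(3) \<pi> B] conditional_independenceD[OF assms(4) \<pi> B]
            assms(5)[OF B_block] by simp
      qed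
    qed
  qed
  then show ?thesis by blast
qed

theorem proposition3:
  fixes p :: "('a::finite) set \<Rightarrow> 'a set set \<Rightarrow> real"
  shows "(random_partition p \<and> generates_potential p \<and> conditional_independence p)
           \<longleftrightarrow> p = ewens"
proof
  assume p: "random_partition p \<and> generates_potential p \<and> conditional_independence p"
  then have "block_prob p N B = block_prob ewens N B" if "B \<subseteq> N" "B \<noteq> {}" for N B
    using that block_prob_ewens[OF that] by (simp add: generates_potential_iff_block_prob)
  then show "p = ewens"
    using p random_partition_ewens conditional_independence_ewens
    by (intro conditional_independence_eqI) simp_all
next
  assume "p = ewens"
  then show "random_partition p \<and> generates_potential p \<and> conditional_independence p"
    by (simp add: random_partition_ewens generates_potential_ewens conditional_independence_ewens)
qed

end
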